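(* The Norton–Sakuma algebra $V_{4A}$ has infinitely many maximal associative subalgebras. However, it has only two non-trivial maximal associative subalgebras.
   Context: $V_{4A}$ is the $5$-dimensional real commutative algebra (with identity and positive definite associative inner product) generated by two $2A$-axes $a_t,a_g$ of the Griess algebra whose involutions $t,g$ have product $tg$ in Monster class $4A$; equivalently, the algebra generated by two Majorana axes (idempotents of length $1$, $\mathrm{ad}$-diagonalizable with eigenvalues in $\{0,1,\frac14,\frac1{32}\}$) whose Majorana involutions have product of order $4$ and with $(a_t,a_g)=\frac1{32}$. It has basis $a_0,a_1,a_2,a_3,v$ with $a_i=\psi(t\rho^i)$ type axes, products $a_i\cdot a_i=a_i$, $v\cdot v=v$, $a_0\cdot a_1=\frac1{64}(3a_0+3a_1+a_2+a_3-3v)$, $a_0\cdot v=\frac1{16}(5a_0-2a_1-a_2-2a_3+3v)$, $a_0\cdot a_2=0$, and the remaining products obtained from the dihedral symmetry of order $8$ permuting indices $i\in\mathbb Z/4$ (generated by $i\mapsto -i$ and $i\mapsto 1-i$) and fixing $v$; $(a_i,a_i)=1$, $(a_i,a_{i\pm1})=\frac1{32}$, $(a_i,a_{i+2})=0$, $(a_i,v)=\frac38$, $(v,v)=2$. For a non-zero idempotent $x\neq\mathbb 1$, $V_x$ is the span of $\{x,\mathbb 1-x\}$; an associative subalgebra is trivial if it equals some $V_x$ (or the subalgebra generated by $0$ or $\mathbb 1$), non-trivial otherwise. Maximal associative means maximal under inclusion among associative subalgebras. *)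

theory Defs
  imports "HOL-Analysis.Analysis"
begin

text \<open>Basis of the Norton-Sakuma algebra V_4A: a_0, a_1, a_2, a_3, v.\<close>
datatype nsb = A0 | A1 | A2 | A3 | Vv

lemma UNIV_nsb: "(UNIV :: nsb set) = {A0, A1, A2, A3, Vv}"
  by (auto intro: nsb.exhaust)

instance nsb :: finite
  by standard (simp add: UNIV_nsb)

type_synonym v4a = "real ^ nsb"

definition e :: "nsb \<Rightarrow> v4a" where
  "e b = axis b 1"

fun aidx :: "nsb \<Rightarrow> int" where
  "aidx A0 = 0" | "aidx A1 = 1" | "aidx A2 = 2" | "aidx A3 = 3" | "aidx Vv = 0"

definition ax :: "int \<Rightarrow> nsb" where
  "ax k = (let m = k mod 4 in if m = 0 then A0 else if m = 1 then A1 else if m = 2 then A2 else A3)"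

definition prod_aa :: "int \<Rightarrow> int \<Rightarrow> v4a" where
  "prod_aa i j =
     (if (j - i) mod 4 = 0 then e (ax i)
      else if (j - i) mod 4 = 2 then 0
      else (1/64) *\<^sub>R (3 *\<^sub>R e (ax i) + 3 *\<^sub>R e (ax j) + e (ax (i + 2)) + e (ax (j + 2))
                         - 3 *\<^sub>R e Vv))"

definition prod_av :: "int \<Rightarrow> v4a" where
  "prod_av i = (1/16) *\<^sub>R (5 *\<^sub>R e (ax i) - 2 *\<^sub>R e (ax (i + 1)) - e (ax (i + 2))
                            - 2 *\<^sub>R e (ax (i + 3)) + 3 *\<^sub>R e Vv)"

definition bmul :: "nsb \<Rightarrow> nsb \<Rightarrow> v4a" where
  "bmul b c =
     (if b = Vv \<and> c = Vv then e Vv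
      else if b = Vv then prod_av (aidx c)
      else if c = Vv then prod_av (aidx b)
      else prod_aa (aidx b) (aidx c))"

definition mult :: "v4a \<Rightarrow> v4a \<Rightarrow> v4a" where
  "mult x y = (\<Sum>b\<in>UNIV. \<Sum>c\<in>UNIV. (x $ b * y $ c) *\<^sub>R bmul b c)"

definition one4A :: v4a where
  "one4A = (THE u. \<forall>x. mult u x = x \<and> mult x u = x)"

definition idempotent :: "v4a \<Rightarrow> bool" where
  "idempotent x \<longleftrightarrow> mult x x = x"

definition Vx :: "v4a \<Rightarrow> v4a set" where
  "Vx x = span {x, one4A - x}"

definition subalgebra :: "v4a set \<Rightarrow> bool" where
  "subalgebra S \<longleftrightarrow> subspace S \<and> (\<forall>x\<in>S. \<forall>y\<in>S. mult x y \<in> S)"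

definition assoc_subalgebra :: "v4a set \<Rightarrow> bool" where
  "assoc_subalgebra S \<longleftrightarrow> subalgebra S \<and>
     (\<forall>x\<in>S. \<forall>y\<in>S. \<forall>z\<in>S. mult (mult x y) z = mult x (mult y z))"

definition max_assoc_subalgebra :: "v4a set \<Rightarrow> bool" where
  "max_assoc_subalgebra S \<longleftrightarrow> assoc_subalgebra S \<and>
     (\<forall>T. assoc_subalgebra T \<and> S \<subseteq> T \<longrightarrow> T = S)"

text \<open>Trivial associative subalgebras: some V_x (x a nonzero idempotent, x \<noteq> 1),
  or the subalgebra generated by 0 (= {0}) or by 1 (= span{1}).\<close>
definition trivial_assoc :: "v4a set \<Rightarrow> bool" where
  "trivial_assoc S \<longleftrightarrow>
     (\<exists>x. idempotent x \<and> x \<noteq> 0 \<and> x \<noteq> one4A \<and> S = Vx x)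
     \<or> S = {0} \<or> S = span {one4A}"

end

theory Submission
  imports Defs
begin

text \<open>
  The form \<open>(\<cdot>,\<cdot>)\<close> is positive definite and associative, so on a subalgebra \<open>S\<close> the cubic
  form \<open>(z z, z)\<close> attains its maximum on the unit sphere of \<open>S\<close> at a multiple of an idempotent,
  and if \<open>S\<close> has a unit \<open>u\<close> and \<open>dim S \<ge> 2\<close> this idempotent is not \<open>u\<close>.
  Every idempotent of \<open>V\<^sub>4\<^sub>A\<close> has trace \<open>(x, \<one>)\<close> in \<open>{0, 1, 12/7, 2, 16/7, 3, 4}\<close>, and those
  of trace \<open>1\<close> are the axes \<open>a\<^sub>i\<close>. A maximal associative subalgebra contains \<open>\<one>\<close>; if it is not
  some \<open>V\<^sub>x\<close>, splitting idempotents twice decomposes \<open>\<one>\<close> into three orthogonal idempotents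
  whose traces add up to \<open>4\<close>, so two of them are orthogonal axes \<open>a\<^sub>i, a\<^sub>i\<^sub>+\<^sub>2\<close>. Associativity
  with \<open>a\<^sub>i\<close> then forces the subalgebra to be \<open>span {a\<^sub>0, a\<^sub>2, \<one>}\<close> or \<open>span {a\<^sub>1, a\<^sub>3, \<one>}\<close>.
  Finally, a one-parameter family of idempotents \<open>x\<close> lying in neither of these gives
  infinitely many distinct maximal associative subalgebras \<open>V\<^sub>x\<close>.
\<close>

lemma ax_simps [simp]: "ax 0 = A0" "ax 1 = A1" "ax 2 = A2" "ax 3 = A3" "ax 4 = A0" "ax 5 = A1" "ax 6 = A2"
  by (simp_all add: ax_def)

lemma e_nth [simp]: "e b $ c = (if c = b then 1 else 0)"
  by (simp add: e_def axis_def)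

lemma sum_UNIV_nsb: "(\<Sum>b\<in>UNIV. f b) = f A0 + f A1 + f A2 + f A3 + (f Vv :: 'a::comm_monoid_add)"
  by (simp add: UNIV_nsb add.assoc)

lemma all_nsb: "(\<forall>i. P i) \<longleftrightarrow> P A0 \<and> P A1 \<and> P A2 \<and> P A3 \<and> P Vv"
  by (metis nsb.exhaust)

lemma vec_eq_nsb_iff:
  "(x::v4a) = y \<longleftrightarrow> x$A0 = y$A0 \<and> x$A1 = y$A1 \<and> x$A2 = y$A2 \<and> x$A3 = y$A3 \<and> x$Vv = y$Vv"
  by (simp add: vec_eq_iff all_nsb)

definition vec5 :: "real \<Rightarrow> real \<Rightarrow> real \<Rightarrow> real \<Rightarrow> real \<Rightarrow> v4a" where
  "vec5 x0 x1 x2 x3 xv = (\<chi> i. case i of A0 \<Rightarrow> x0 | A1 \<Rightarrow> x1 | A2 \<Rightarrow> x2 | A3 \<Rightarrow> x3 | Vv \<Rightarrow> xv)"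

lemma vec5_nth [simp]:
  "vec5 x0 x1 x2 x3 xv $ A0 = x0" "vec5 x0 x1 x2 x3 xv $ A1 = x1" "vec5 x0 x1 x2 x3 xv $ A2 = x2"
  "vec5 x0 x1 x2 x3 xv $ A3 = x3" "vec5 x0 x1 x2 x3 xv $ Vv = xv"
  by (simp_all add: vec5_def)

lemma mult_A0: "mult x y $ A0 =
     x$A0*y$A0 + (3/64)*x$A0*y$A1 + (3/64)*x$A0*y$A3 + (5/16)*x$A0*y$Vv
   + (3/64)*x$A1*y$A0 + (1/64)*x$A1*y$A2 + (-1/8)*x$A1*y$Vv + (1/64)*x$A2*y$A1
   + (1/64)*x$A2*y$A3 + (-1/16)*x$A2*y$Vv + (3/64)*x$A3*y$A0 + (1/64)*x$A3*y$A2
   + (-1/8)*x$A3*y$Vv + (5/16)*x$Vv*y$A0 + (-1/8)*x$Vv*y$A1 + (-1/16)*x$Vv*y$A2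
   + (-1/8)*x$Vv*y$A3"
  by (simp add: mult_def sum_UNIV_nsb bmul_def prod_aa_def prod_av_def algebra_simps)

lemma mult_A1: "mult x y $ A1 =
     (3/64)*x$A0*y$A1 + (1/64)*x$A0*y$A3 + (-1/8)*x$A0*y$Vv + (3/64)*x$A1*y$A0
   + x$A1*y$A1 + (3/64)*x$A1*y$A2 + (5/16)*x$A1*y$Vv + (3/64)*x$A2*y$A1
   + (1/64)*x$A2*y$A3 + (-1/8)*x$A2*y$Vv + (1/64)*x$A3*y$A0 + (1/64)*x$A3*y$A2
   + (-1/16)*x$A3*y$Vv + (-1/8)*x$Vv*y$A0 + (5/16)*x$Vv*y$A1 + (-1/8)*x$Vv*y$A2
   + (-1/16)*x$Vv*y$A3"
  by (simp add: mult_def sum_UNIV_nsb bmul_def prod_aa_def prod_av_def algebra_simps)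

lemma mult_A2: "mult x y $ A2 =
     (1/64)*x$A0*y$A1 + (1/64)*x$A0*y$A3 + (-1/16)*x$A0*y$Vv + (1/64)*x$A1*y$A0
   + (3/64)*x$A1*y$A2 + (-1/8)*x$A1*y$Vv + (3/64)*x$A2*y$A1 + x$A2*y$A2
   + (3/64)*x$A2*y$A3 + (5/16)*x$A2*y$Vv + (1/64)*x$A3*y$A0 + (3/64)*x$A3*y$A2
   + (-1/8)*x$A3*y$Vv + (-1/16)*x$Vv*y$A0 + (-1/8)*x$Vv*y$A1 + (5/16)*x$Vv*y$A2
   + (-1/8)*x$Vv*y$A3"
  by (simp add: mult_def sum_UNIV_nsb bmul_def prod_aa_def prod_av_def algebra_simps)

lemma mult_A3: "mult x y $ A3 =
     (1/64)*x$A0*y$A1 + (3/64)*x$A0*y$A3 + (-1/8)*x$A0*y$Vv + (1/64)*x$A1*y$A0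
   + (1/64)*x$A1*y$A2 + (-1/16)*x$A1*y$Vv + (1/64)*x$A2*y$A1 + (3/64)*x$A2*y$A3
   + (-1/8)*x$A2*y$Vv + (3/64)*x$A3*y$A0 + (3/64)*x$A3*y$A2 + x$A3*y$A3
   + (5/16)*x$A3*y$Vv + (-1/8)*x$Vv*y$A0 + (-1/16)*x$Vv*y$A1 + (-1/8)*x$Vv*y$A2
   + (5/16)*x$Vv*y$A3"
  by (simp add: mult_def sum_UNIV_nsb bmul_def prod_aa_def prod_av_def algebra_simps)

lemma mult_Vv: "mult x y $ Vv =
     (-3/64)*x$A0*y$A1 + (-3/64)*x$A0*y$A3 + (3/16)*x$A0*y$Vv + (-3/64)*x$A1*y$A0
   + (-3/64)*x$A1*y$A2 + (3/16)*x$A1*y$Vv + (-3/64)*x$A2*y$A1 + (-3/64)*x$A2*y$A3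
   + (3/16)*x$A2*y$Vv + (-3/64)*x$A3*y$A0 + (-3/64)*x$A3*y$A2 + (3/16)*x$A3*y$Vv
   + (3/16)*x$Vv*y$A0 + (3/16)*x$Vv*y$A1 + (3/16)*x$Vv*y$A2 + (3/16)*x$Vv*y$A3
   + x$Vv*y$Vv"
  by (simp add: mult_def sum_UNIV_nsb bmul_def prod_aa_def prod_av_def algebra_simps)

lemmas mult_nth = mult_A0 mult_A1 mult_A2 mult_A3 mult_Vv

lemma mult_commute: "mult x y = mult y x"
  by (simp add: vec_eq_nsb_iff mult_nth algebra_simps)

lemma mult_add_left: "mult (x + y) z = mult x z + mult y z"
  by (simp add: mult_def algebra_simps sum.distrib)

lemma mult_add_right: "mult z (x + y) = mult z x + mult z y"
  by (simp add: mult_def algebra_simps sum.distrib)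

lemma mult_scaleR_left: "mult (c *\<^sub>R x) y = c *\<^sub>R mult x y"
  by (simp add: mult_def scaleR_sum_right mult.assoc)

lemma mult_scaleR_right: "mult y (c *\<^sub>R x) = c *\<^sub>R mult y x"
  by (simp add: mult_def scaleR_sum_right mult.left_commute)

lemma mult_diff_left: "mult (x - y) z = mult x z - mult y z"
  using mult_add_left[of x "-y" z] mult_scaleR_left[of "-1" y z] by simp

lemma mult_diff_right: "mult z (x - y) = mult z x - mult z y"
  using mult_add_right[of z x "-y"] mult_scaleR_right[of z "-1" y] by simp

lemma mult_zero_left [simp]: "mult 0 x = 0" and mult_zero_right [simp]: "mult x 0 = 0"
  by (simp_all add: mult_def)

lemma vec5_one_mult: "mult (vec5 (4/5) (4/5) (4/5) (4/5) (2/5)) x = x"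
  by (simp add: vec_eq_nsb_iff mult_nth algebra_simps)

lemma one4A_eq: "one4A = vec5 (4/5) (4/5) (4/5) (4/5) (2/5)"
  unfolding one4A_def
proof (rule the_equality)
  fix u assume "\<forall>x. mult u x = x \<and> mult x u = x"
  then show "u = vec5 (4/5) (4/5) (4/5) (4/5) (2/5)"
    using vec5_one_mult by metis
qed (simp add: vec5_one_mult mult_commute[of _ "vec5 _ _ _ _ _"])

lemma mult_one_left [simp]: "mult one4A x = x"
  by (simp add: one4A_eq vec5_one_mult)

lemma mult_one_right [simp]: "mult x one4A = x"
  by (simp add: mult_commute[of x])

lemma one4A_nth [simp]:
  "one4A $ A0 = 4/5" "one4A $ A1 = 4/5" "one4A $ A2 = 4/5" "one4A $ A3 = 4/5" "one4A $ Vv = 2/5"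
  by (simp_all add: one4A_eq)

section \<open>The invariant form\<close>

definition form :: "v4a \<Rightarrow> v4a \<Rightarrow> real" where
  "form x y =
     x$A0*y$A0 + (1/32)*x$A0*y$A1 + (1/32)*x$A0*y$A3 + (3/8)*x$A0*y$Vv
   + (1/32)*x$A1*y$A0 + x$A1*y$A1 + (1/32)*x$A1*y$A2 + (3/8)*x$A1*y$Vv
   + (1/32)*x$A2*y$A1 + x$A2*y$A2 + (1/32)*x$A2*y$A3 + (3/8)*x$A2*y$Vv
   + (1/32)*x$A3*y$A0 + (1/32)*x$A3*y$A2 + x$A3*y$A3 + (3/8)*x$A3*y$Vv
   + (3/8)*x$Vv*y$A0 + (3/8)*x$Vv*y$A1 + (3/8)*x$Vv*y$A2 + (3/8)*x$Vv*y$A3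
   + 2*x$Vv*y$Vv"

lemma form_commute: "form x y = form y x"
  by (simp add: form_def algebra_simps)

lemma form_add_left: "form (x + y) z = form x z + form y z"
  and form_add_right: "form z (x + y) = form z x + form z y"
  and form_scaleR_left: "form (c *\<^sub>R x) y = c * form x y"
  and form_scaleR_right: "form y (c *\<^sub>R x) = c * form y x"
  by (simp_all add: form_def algebra_simps add_divide_distrib)

lemma form_diff_left: "form (x - y) z = form x z - form y z"
  using form_add_left[of x "-y" z] form_scaleR_left[of "-1" y z] by simp

lemma form_diff_right: "form z (x - y) = form z x - form z y"
  using form_add_right[of z x "-y"] form_scaleR_right[of z "-1" y] by simp

lemma form_zero [simp]: "form 0 x = 0" "form x 0 = 0"
  by (simp_all add: form_def)

lemma form_mult_assoc: "form (mult x y) z = form x (mult y z)"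
  by (simp add: form_def mult_nth algebra_simps)

lemma power2_norm_v4a: "(norm x)\<^sup>2 = (x$A0)\<^sup>2 + (x$A1)\<^sup>2 + (x$A2)\<^sup>2 + (x$A3)\<^sup>2 + (x$Vv)\<^sup>2"
  unfolding power2_norm_eq_inner by (simp add: inner_vec_def sum_UNIV_nsb power2_eq_square)

lemma power2_norm_le_form: "(norm x)\<^sup>2 \<le> 2 * form x x"
proof -
  \<comment> \<open>an \<open>LDL\<^sup>T\<close> factorisation of twice the Gram matrix minus the identity\<close>
  have "2 * form x x - (norm x)\<^sup>2 =
      (x$A0 + x$A1/16 + x$A3/16 + 3/4 * x$Vv)\<^sup>2
    + 255/256 * (x$A1 + 16/255 * x$A2 - x$A3/255 + 12/17 * x$Vv)\<^sup>2
    + 254/255 * (x$A2 + 8/127 * x$A3 + 90/127 * x$Vv)\<^sup>2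
    + 126/127 * (x$A3 + 2/3 * x$Vv)\<^sup>2 + (x$Vv)\<^sup>2"
    unfolding power2_norm_v4a by (simp add: form_def power2_eq_square algebra_simps)
  also have "\<dots> \<ge> 0"
    by (intro add_nonneg_nonneg mult_nonneg_nonneg) simp_all
  finally show ?thesis by simp
qed

lemma form_self_pos: "x \<noteq> 0 \<Longrightarrow> form x x > 0"
  using power2_norm_le_form[of x] by (smt (verit) zero_less_norm_iff zero_less_power)

lemma form_self_nonneg: "form x x \<ge> 0"
  using power2_norm_le_form[of x] by (smt (verit) zero_le_power2)

lemma form_self_eq_0_iff [simp]: "form x x = 0 \<longleftrightarrow> x = 0"
  using form_self_pos[of x] by (cases "x = 0") auto

section \<open>Idempotents and their traces\<close>

lemma square_minus_self_sym_coords: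
  fixes x :: v4a
  defines "s \<equiv> (x$A0 + x$A2)/2" and "a \<equiv> (x$A0 - x$A2)/2"
    and "t \<equiv> (x$A1 + x$A3)/2" and "b \<equiv> (x$A1 - x$A3)/2" and "r \<equiv> x$Vv"
  defines "d \<equiv> mult x x - x"
  shows "(d$A0 + d$A2)/2 = a^2 + s^2 + s * t/4 + s * r/2 - t * r/2 - s"
    and "(d$A1 + d$A3)/2 = b^2 + t^2 + s * t/4 + t * r/2 - s * r/2 - t"
    and "d$Vv = r^2 - 3 * s * t/8 + 3 * s * r/4 + 3 * t * r/4 - r"
    and "(d$A0 - d$A2)/2 = a * (2 * s + t/8 + 3 * r/4 - 1)"
    and "(d$A1 - d$A3)/2 = b * (2 * t + s/8 + 3 * r/4 - 1)"
  unfolding d_def s_def a_def t_def b_def r_def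
  by (simp_all add: mult_nth field_simps power2_eq_square)

lemma idempotent_sym_eqs:
  assumes "mult x x = x"
  defines "s \<equiv> (x$A0 + x$A2)/2" and "a \<equiv> (x$A0 - x$A2)/2"
    and "t \<equiv> (x$A1 + x$A3)/2" and "b \<equiv> (x$A1 - x$A3)/2" and "r \<equiv> x$Vv"
  shows "a^2 + s^2 + s * t/4 + s * r/2 - t * r/2 - s = 0"
    and "b^2 + t^2 + s * t/4 + t * r/2 - s * r/2 - t = 0"
    and "r^2 - 3 * s * t/8 + 3 * s * r/4 + 3 * t * r/4 - r = 0"
    and "a * (2 * s + t/8 + 3 * r/4 - 1) = 0"
    and "b * (2 * t + s/8 + 3 * r/4 - 1) = 0"
  using square_minus_self_sym_coords[of x, folded s_def a_def t_def b_def r_def] assms(1)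
  by simp_all

lemma idempotent_sym_sum:
  fixes s t r :: real
  assumes "s^2 + s * t/4 + s * r/2 - t * r/2 - s = 0"
    and "t^2 + s * t/4 + t * r/2 - s * r/2 - t = 0"
    and "r^2 - 3 * s * t/8 + 3 * s * r/4 + 3 * t * r/4 - r = 0"
  shows "s + t + r \<in> {0, 1, 2}"
proof -
  have "(s+t+r) * (s+t+r-1) * (s+t+r-2) = 0"
    using assms by algebra
  then show ?thesis by auto
qed

lemma idempotent_half_sym:
  fixes s t r a :: real
  assumes "a^2 + s^2 + s * t/4 + s * r/2 - t * r/2 - s = 0"
    and "t^2 + s * t/4 + t * r/2 - s * r/2 - t = 0"
    and "r^2 - 3 * s * t/8 + 3 * s * r/4 + 3 * t * r/4 - r = 0"
    and "2 * s + t/8 + 3 * r/4 = 1" and "a \<noteq> 0"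
  shows "(t = 0 \<and> r = 0 \<and> s = 1/2 \<and> a\<^sup>2 = 1/4) \<or> (t = 4/5 \<and> r = 2/5 \<and> s = 3/10)"
proof -
  have "t * (5 * t - 4) = 0" using assms by algebra
  then consider "t = 0" | "t = 4/5" by force
  then show ?thesis
  proof cases
    case 1
    then have "r = 0" using assms by algebra
    moreover from 1 this have "s = 1/2" using assms by algebra
    moreover from 1 calculation have "a\<^sup>2 = 1/4" using assms by algebra
    ultimately show ?thesis using 1 by blast
  next
    case 2
    then have "r = 2/5" using assms by algebra
    moreover from 2 this have "s = 3/10" using assms by algebra
    ultimately show ?thesis using 2 by blast
  qed
qed

lemma idempotent_generic_sum:
  fixes s t r a b :: real
  assumes "a^2 + s^2 + s * t/4 + s * r/2 - t * r/2 - s = 0"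
    and "b^2 + t^2 + s * t/4 + t * r/2 - s * r/2 - t = 0"
    and "r^2 - 3 * s * t/8 + 3 * s * r/4 + 3 * t * r/4 - r = 0"
    and "2 * s + t/8 + 3 * r/4 = 1" and "2 * t + s/8 + 3 * r/4 = 1"
  shows "s + t + r \<in> {6/7, 8/7}"
proof -
  have "(7 * (s+t+r) - 6) * (7 * (s+t+r) - 8) = 0"
    using assms by algebra
  then show ?thesis by auto
qed

definition tr :: "v4a \<Rightarrow> real" where
  "tr x = form x one4A"

lemma tr_coords: "tr x = x$A0 + x$A1 + x$A2 + x$A3 + 2 * x$Vv"
  by (simp add: tr_def form_def)

lemma tr_add: "tr (x + y) = tr x + tr y"
  by (simp add: tr_coords)

lemma tr_one [simp]: "tr one4A = 4"
  by (simp add: tr_coords)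

lemma tr_idempotent_pos:
  assumes "mult x x = x" and "x \<noteq> 0"
  shows "tr x > 0"
proof -
  have "tr x = form x x"
    by (metis assms(1) form_mult_assoc mult_one_right tr_def)
  then show ?thesis using form_self_pos[OF assms(2)] by simp
qed

lemma power2_eq_quarter_iff: "(a::real)\<^sup>2 = 1/4 \<longleftrightarrow> a = 1/2 \<or> a = -1/2"
  using power2_eq_iff[of a "1/2"] by (simp add: power_divide)

lemma idempotent_tr_cases:
  assumes "mult x x = x"
  shows "tr x \<in> {0, 1, 12/7, 2, 16/7, 3, 4} \<and> (tr x = 1 \<longrightarrow> x \<in> {e A0, e A1, e A2, e A3})"
proof -
  define s a t b r where "s = (x$A0 + x$A2)/2" and "a = (x$A0 - x$A2)/2"
    and "t = (x$A1 + x$A3)/2" and "b = (x$A1 - x$A3)/2" and "r = x$Vv"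
  note E = idempotent_sym_eqs[OF assms, folded s_def a_def t_def b_def r_def]
  have trx: "tr x = 2 * (s + t + r)"
    by (simp add: tr_coords s_def t_def r_def field_simps)
  have x: "x = vec5 (s + a) (t + b) (s - a) (t - b) r"
    by (simp add: vec_eq_nsb_iff s_def a_def t_def b_def r_def field_simps)
  consider "a = 0" "b = 0" | "a \<noteq> 0" "b = 0" | "a = 0" "b \<noteq> 0" | "a \<noteq> 0" "b \<noteq> 0"
    by blast
  then show ?thesis
  proof cases
    case 1
    then have "s + t + r \<in> {0, 1, 2}" using idempotent_sym_sum[of s t r] E(1-3) by simp
    then show ?thesis using trx by auto
  next
    case 2
    have "2 * s + t/8 + 3 * r/4 = 1" using E(4) \<open>a \<noteq> 0\<close> by simp
    with idempotent_half_sym[OF E(1) _ E(3) this \<open>a \<noteq> 0\<close>] E(2) \<open>b = 0\<close>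
    have "(t = 0 \<and> r = 0 \<and> s = 1/2 \<and> a\<^sup>2 = 1/4) \<or> (t = 4/5 \<and> r = 2/5 \<and> s = 3/10)"
      by simp
    then consider "t = 0" "r = 0" "s = 1/2" "a = 1/2 \<or> a = -1/2" | "t = 4/5" "r = 2/5" "s = 3/10"
      using power2_eq_quarter_iff[of a] by blast
    then show ?thesis
    proof cases
      case 1
      then have "x = e A0 \<or> x = e A2" using \<open>b = 0\<close> by (auto simp: x vec_eq_nsb_iff)
      then show ?thesis using trx 1 by auto
    qed (use trx in simp)
  next
    case 3
    have "2 * t + s/8 + 3 * r/4 = 1" using E(5) \<open>b \<noteq> 0\<close> by simp
    with idempotent_half_sym[of b t s r, OF _ _ _ this \<open>b \<noteq> 0\<close>] E(1-3) \<open>a = 0\<close>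
    have "(s = 0 \<and> r = 0 \<and> t = 1/2 \<and> b\<^sup>2 = 1/4) \<or> (s = 4/5 \<and> r = 2/5 \<and> t = 3/10)"
      by (simp add: algebra_simps)
    then consider "s = 0" "r = 0" "t = 1/2" "b = 1/2 \<or> b = -1/2" | "s = 4/5" "r = 2/5" "t = 3/10"
      using power2_eq_quarter_iff[of b] by blast
    then show ?thesis
    proof cases
      case 1
      then have "x = e A1 \<or> x = e A3" using \<open>a = 0\<close> by (auto simp: x vec_eq_nsb_iff)
      then show ?thesis using trx 1 by auto
    qed (use trx in simp)
  next
    case 4
    then have "s + t + r \<in> {6/7, 8/7}" using idempotent_generic_sum[of a s t r b] E by simp
    then show ?thesis using trx by auto
  qed
qed

section \<open>Idempotents from the cubic form\<close>

definition cub :: "v4a \<Rightarrow> real" where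
  "cub z = form (mult z z) z"

lemma form_expand:
  "form (z + t *\<^sub>R w) (z + t *\<^sub>R w) = form z z + 2 * t * form z w + t\<^sup>2 * form w w"
  by (simp add: form_add_left form_add_right form_scaleR_left form_scaleR_right form_commute[of w z]
      algebra_simps power2_eq_square)

lemma form_mult_swap: "form (mult x y) y = form (mult y y) x"
  by (metis form_commute form_mult_assoc mult_commute)

lemma cub_expand:
  "cub (z + t *\<^sub>R w) = cub z + 3 * t * form (mult z z) w + 3 * t\<^sup>2 * form (mult w w) z + t^3 * cub w"
proof -
  have "mult (z + t *\<^sub>R w) (z + t *\<^sub>R w) = mult z z + (2 * t) *\<^sub>R mult z w + t\<^sup>2 *\<^sub>R mult w w"
    by (simp add: vec_eq_nsb_iff mult_nth field_simps power2_eq_square)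
  then have "cub (z + t *\<^sub>R w) = cub z + t * form (mult z z) w + 2 * t * form (mult z w) z
      + 2 * t * t * form (mult z w) w + t\<^sup>2 * form (mult w w) z + t\<^sup>2 * t * cub w"
    by (simp add: cub_def form_add_left form_add_right form_scaleR_left form_scaleR_right algebra_simps)
  also have "form (mult z w) z = form (mult z z) w"
    using form_mult_swap[of w z] by (simp add: mult_commute)
  also have "form (mult z w) w = form (mult w w) z"
    by (rule form_mult_swap)
  finally show ?thesis
    by (simp add: algebra_simps power2_eq_square power3_eq_cube)
qed

lemma form_self_scaleR: "form (c *\<^sub>R z) (c *\<^sub>R z) = c\<^sup>2 * form z z"
  by (simp add: form_scaleR_left form_scaleR_right power2_eq_square)

lemma cub_scaleR: "cub (c *\<^sub>R z) = c^3 * cub z"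
  by (simp add: cub_def form_scaleR_left form_scaleR_right mult_scaleR_left mult_scaleR_right
      power3_eq_cube)

lemma continuous_on_form_self: "continuous_on A (\<lambda>z. form z z)"
  unfolding form_def by (intro continuous_intros)

lemma continuous_on_cub: "continuous_on A cub"
  unfolding cub_def form_def mult_nth by (intro continuous_intros)

lemma linear_coeff_zero_if_nonpos:
  fixes b c d e :: real
  assumes "\<And>t. b * t + c * t\<^sup>2 + d * t^3 + e * t^4 \<le> 0"
  shows "b = 0"
proof (rule ccontr)
  assume "b \<noteq> 0"
  define g where "g t = b + c * t + d * t\<^sup>2 + e * t^3" for t
  have "((\<lambda>t. b * g t) \<longlongrightarrow> b * (b + c * 0 + d * 0\<^sup>2 + e * 0^3)) (at 0)"
    unfolding g_def by (intro tendsto_intros)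
  then have "((\<lambda>t. b * g t) \<longlongrightarrow> b * b) (at 0)"
    by simp
  moreover have "b * b > 0"
    using \<open>b \<noteq> 0\<close> not_real_square_gt_zero by blast
  ultimately have "\<forall>\<^sub>F t in at 0. b * g t > 0"
    by (rule order_tendstoD(1))
  then obtain \<delta> where "\<delta> > 0" and \<delta>: "\<And>t. t \<noteq> 0 \<Longrightarrow> dist t 0 < \<delta> \<Longrightarrow> b * g t > 0"
    unfolding eventually_at by blast
  have tg: "t * g t \<le> 0" for t
    using assms[of t] unfolding g_def
    by (simp add: algebra_simps power2_eq_square power3_eq_cube power4_eq_xxxx)
  have "g (\<delta>/2) \<le> 0"
    using tg[of "\<delta>/2"] \<open>\<delta> > 0\<close> by (simp add: mult_le_0_iff)
  moreover have "g (-\<delta>/2) \<ge> 0"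
    using tg[of "-\<delta>/2"] \<open>\<delta> > 0\<close> by (simp add: zero_le_mult_iff)
  moreover have "b * g (\<delta>/2) > 0" "b * g (-\<delta>/2) > 0"
    using \<delta>[of "\<delta>/2"] \<delta>[of "-\<delta>/2"] \<open>\<delta> > 0\<close> by simp_all
  ultimately show False
    by (auto simp: zero_less_mult_iff)
qed

lemma cub_attains_max_on_sphere:
  assumes "subspace S" and "S \<noteq> {0}"
  obtains z0 where "z0 \<in> S" and "form z0 z0 = 1"
    and "\<And>z. z \<in> S \<Longrightarrow> cub z \<le> cub z0 * form z z * sqrt (form z z)"
proof -
  have normalize: "(1 / sqrt (form z z)) *\<^sub>R z \<in> S \<inter> {z. form z z = 1}" if "z \<in> S" "z \<noteq> 0" for z
  proof -
    have "(1 / sqrt n)\<^sup>2 * n = 1" if "n > 0" for n :: real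
      using that by (simp add: power_divide)
    then have "form ((1 / sqrt (form z z)) *\<^sub>R z) ((1 / sqrt (form z z)) *\<^sub>R z) = 1"
      unfolding form_self_scaleR using form_self_pos[OF \<open>z \<noteq> 0\<close>] by blast
    moreover have "(1 / sqrt (form z z)) *\<^sub>R z \<in> S"
      using subspace_scale[OF assms(1) that(1)] .
    ultimately show ?thesis by simp
  qed
  define K where "K = S \<inter> {z. form z z = 1}"
  have "closed K"
    unfolding K_def using closed_subspace[OF assms(1)]
    by (intro closed_Int closed_Collect_eq continuous_on_form_self continuous_on_const)
  moreover have "bounded K"
  proof -
    have "norm z \<le> 2" if "z \<in> K" for z
    proof (rule power2_le_imp_le)
      show "(norm z)\<^sup>2 \<le> 2\<^sup>2"
        using power2_norm_le_form[of z] that unfolding K_def by simp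
    qed simp
    then show ?thesis unfolding bounded_iff by blast
  qed
  ultimately have "compact K"
    by (simp add: compact_eq_bounded_closed)
  moreover have "K \<noteq> {}"
  proof -
    obtain z where "z \<in> S" "z \<noteq> 0" using assms(2) subspace_0[OF assms(1)] by blast
    then show ?thesis using normalize unfolding K_def by blast
  qed
  ultimately obtain z0 where z0: "z0 \<in> K" and max: "\<And>z. z \<in> K \<Longrightarrow> cub z \<le> cub z0"
    by (metis continuous_attains_sup continuous_on_cub)
  have "cub z \<le> cub z0 * form z z * sqrt (form z z)" if "z \<in> S" for z
  proof (cases "z = 0")
    case False
    define n where "n = form z z"
    have "n > 0" using form_self_pos[OF False] n_def by simp
    have "(1 / sqrt n)^3 * cub z \<le> cub z0"
      using max[of "(1 / sqrt n) *\<^sub>R z"] normalize[OF that False] by (simp add: K_def n_def cub_scaleR)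
    then have "cub z \<le> sqrt n ^ 3 * cub z0"
      using \<open>n > 0\<close> by (simp add: power_divide field_simps)
    also have "sqrt n ^ 3 = n * sqrt n"
      using \<open>n > 0\<close> by (simp add: power3_eq_cube)
    finally show ?thesis by (simp add: n_def algebra_simps)
  qed (simp add: cub_def)
  with z0 show ?thesis
    by (intro that[of z0]) (auto simp: K_def)
qed

lemma real_sqrt_le_self: "1 \<le> x \<Longrightarrow> sqrt x \<le> (x::real)"
  using real_sqrt_le_mono[of x "x\<^sup>2"] by (simp add: power2_eq_square)

text \<open>The Lagrange condition at a maximiser of the cubic form on the unit sphere.\<close>

lemma cub_max_square:
  assumes S: "subspace S" and mult_closed: "\<And>x y. x \<in> S \<Longrightarrow> y \<in> S \<Longrightarrow> mult x y \<in> S"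
    and z0: "z0 \<in> S" "form z0 z0 = 1"
    and max: "\<And>z. z \<in> S \<Longrightarrow> cub z \<le> cub z0 * form z z * sqrt (form z z)"
  shows "mult z0 z0 = cub z0 *\<^sub>R z0"
proof -
  define M where "M = cub z0"
  have "M \<ge> 0"
  proof -
    have "cub ((-1) *\<^sub>R z0) \<le> M * form ((-1) *\<^sub>R z0) ((-1) *\<^sub>R z0) * sqrt (form ((-1) *\<^sub>R z0) ((-1) *\<^sub>R z0))"
      unfolding M_def by (rule max) (use S z0 subspace_scale in blast)
    then show ?thesis
      unfolding cub_scaleR form_self_scaleR z0 M_def by simp
  qed
  have stationary: "form (mult z0 z0) w = 0" if "w \<in> S" "form z0 w = 0" for w
  proof -
    define n where "n = form w w"
    have "n \<ge> 0" using form_self_nonneg n_def by simp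
    have "(3 * form (mult z0 z0) w) * t + (3 * form (mult w w) z0 - 2 * M * n) * t\<^sup>2
        + cub w * t^3 + (- M * n\<^sup>2) * t^4 \<le> 0" for t
    proof -
      define z where "z = z0 + t *\<^sub>R w"
      have N: "form z z = 1 + t\<^sup>2 * n"
        by (simp add: z_def form_expand z0 that n_def)
      then have "form z z \<ge> 1" using \<open>n \<ge> 0\<close> by simp
      have "z \<in> S"
        using S z0 that by (simp add: z_def subspace_add subspace_scale)
      then have "cub z \<le> M * form z z * sqrt (form z z)"
        unfolding M_def by (rule max)
      also have "\<dots> \<le> M * form z z * form z z"
        using \<open>M \<ge> 0\<close> \<open>form z z \<ge> 1\<close> real_sqrt_le_self by (intro mult_left_mono) auto
      finally have "cub z \<le> M * (1 + t\<^sup>2 * n) * (1 + t\<^sup>2 * n)"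
        unfolding N .
      moreover have "cub z = M + 3 * t * form (mult z0 z0) w + 3 * t\<^sup>2 * form (mult w w) z0 + t^3 * cub w"
        unfolding z_def cub_expand M_def ..
      ultimately show ?thesis
        by (simp add: algebra_simps power2_eq_square power3_eq_cube power4_eq_xxxx)
    qed
    from linear_coeff_zero_if_nonpos[OF this] show ?thesis
      by simp
  qed
  define w where "w = mult z0 z0 - M *\<^sub>R z0"
  have "w \<in> S"
    unfolding w_def using S mult_closed z0 by (simp add: subspace_diff subspace_scale)
  moreover have "form z0 w = 0"
    using z0 by (simp add: w_def form_diff_right form_scaleR_right M_def cub_def form_commute)
  ultimately have "form w w = 0"
    using stationary by (simp add: w_def form_diff_left form_scaleR_left)
  then show ?thesis
    by (simp add: w_def M_def)
qed

text \<open>Moving from \<open>u\<close> in a direction \<open>w \<bottom> u\<close> increases \<open>cub\<^sup>2 / form\<^sup>3\<close> to second order.\<close>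

lemma cub_not_max_at_unit:
  assumes S: "subspace S" and u: "u \<in> S" "\<And>s. s \<in> S \<Longrightarrow> mult u s = s"
    and w0: "w0 \<in> S" "w0 \<notin> span {u}"
  obtains z where "z \<in> S" and "cub z > 0" and "(form z z)^3 < form u u * (cub z)\<^sup>2"
proof -
  have "u \<noteq> 0"
    using u(2)[OF w0(1)] w0(2) span_zero by force
  define a where "a = form u u"
  have "a > 0" using form_self_pos[OF \<open>u \<noteq> 0\<close>] a_def by simp
  define w where "w = w0 - (form w0 u / a) *\<^sub>R u"
  have "w \<in> S"
    unfolding w_def using S w0(1) u(1) by (simp add: subspace_diff subspace_scale)
  have "w \<noteq> 0"
  proof
    assume "w = 0"
    then have "w0 = (form w0 u / a) *\<^sub>R u" unfolding w_def by simp
    then show False using w0(2) by (metis span_base span_scale singletonI)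
  qed
  have "form u w = 0"
    using \<open>a > 0\<close> by (simp add: w_def form_diff_right form_scaleR_right a_def form_commute)
  define n k where "n = form w w" and "k = cub w"
  have "n > 0" using form_self_pos[OF \<open>w \<noteq> 0\<close>] n_def by simp
  define P Q where "P t = a + 3 * n * t\<^sup>2 + k * t^3"
    and "Q t = 3 * a\<^sup>2 * n + 2 * a\<^sup>2 * k * t + 6 * a * n\<^sup>2 * t\<^sup>2 + 6 * a * n * k * t^3
      + (a * k\<^sup>2 - n^3) * t^4" for t
  have "(P \<longlongrightarrow> P 0) (at 0)" "(Q \<longlongrightarrow> Q 0) (at 0)"
    unfolding P_def Q_def by (intro tendsto_intros)+
  moreover have "P 0 > 0" "Q 0 > 0"
    using \<open>a > 0\<close> \<open>n > 0\<close> by (simp_all add: P_def Q_def)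
  ultimately have "\<forall>\<^sub>F t in at 0. P t > 0 \<and> Q t > 0"
    by (intro eventually_conj order_tendstoD(1))
  then obtain \<delta> where "\<delta> > 0" and \<delta>: "\<And>t. t \<noteq> 0 \<Longrightarrow> dist t 0 < \<delta> \<Longrightarrow> P t > 0 \<and> Q t > 0"
    unfolding eventually_at by blast
  define t where "t = \<delta>/2"
  have "t > 0" "P t > 0" "Q t > 0"
    using \<delta>[of t] \<open>\<delta> > 0\<close> by (simp_all add: t_def)
  define z where "z = u + t *\<^sub>R w"
  have N: "form z z = a + t\<^sup>2 * n"
    by (simp add: z_def form_expand \<open>form u w = 0\<close> a_def n_def)
  have C: "cub z = P t"
  proof -
    have "form (mult u u) w = 0"
      using u(2)[OF u(1)] \<open>form u w = 0\<close> by simp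
    moreover have "form (mult w w) u = n"
      using form_mult_assoc[of w w u] u(2)[OF \<open>w \<in> S\<close>] by (simp add: mult_commute n_def)
    moreover have "cub u = a"
      using u(2)[OF u(1)] by (simp add: cub_def a_def)
    ultimately show ?thesis
      by (simp add: z_def cub_expand P_def k_def algebra_simps)
  qed
  have "a * (cub z)\<^sup>2 - (form z z)^3 = t\<^sup>2 * Q t"
    unfolding C N P_def Q_def
    by (simp add: algebra_simps power2_eq_square power3_eq_cube power4_eq_xxxx)
  also have "\<dots> > 0"
    using \<open>t > 0\<close> \<open>Q t > 0\<close> by simp
  finally have "(form z z)^3 < a * (cub z)\<^sup>2" by simp
  moreover have "z \<in> S"
    using S u(1) \<open>w \<in> S\<close> by (simp add: z_def subspace_add subspace_scale)
  ultimately show ?thesis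
    using C \<open>P t > 0\<close> a_def by (intro that[of z]) simp_all
qed

lemma exists_idempotent:
  assumes S: "subspace S" and mult_closed: "\<And>x y. x \<in> S \<Longrightarrow> y \<in> S \<Longrightarrow> mult x y \<in> S"
    and u: "u \<in> S" "\<And>s. s \<in> S \<Longrightarrow> mult u s = s"
    and w0: "w0 \<in> S" "w0 \<notin> span {u}"
  shows "\<exists>e\<in>S. mult e e = e \<and> e \<noteq> 0 \<and> e \<noteq> u"
proof -
  have "S \<noteq> {0}"
    using w0 span_zero by auto
  then obtain z0 where z0: "z0 \<in> S" "form z0 z0 = 1"
    and max: "\<And>z. z \<in> S \<Longrightarrow> cub z \<le> cub z0 * form z z * sqrt (form z z)"
    using cub_attains_max_on_sphere[OF S] by blast
  define M where "M = cub z0"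
  have sq: "mult z0 z0 = M *\<^sub>R z0"
    unfolding M_def by (rule cub_max_square[OF S mult_closed z0 max])
  have "M \<noteq> 0"
  proof
    assume "M = 0"
    have "form z0 z0 = form (mult z0 z0) u"
      using form_mult_assoc[of z0 z0 u] u(2)[OF z0(1)] by (simp add: mult_commute)
    then show False using z0(2) sq \<open>M = 0\<close> by simp
  qed
  define e where "e = (1 / M) *\<^sub>R z0"
  have "e \<in> S"
    unfolding e_def using S z0(1) by (rule subspace_scale)
  moreover have "mult e e = e"
    using \<open>M \<noteq> 0\<close> by (simp add: e_def mult_scaleR_left mult_scaleR_right sq)
  moreover have "e \<noteq> 0"
    using \<open>M \<noteq> 0\<close> z0(2) by (auto simp: e_def)
  moreover have "e \<noteq> u"
  proof
    assume "e = u"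
    moreover have "z0 = M *\<^sub>R e"
      using \<open>M \<noteq> 0\<close> by (simp add: e_def)
    ultimately have z0u: "z0 = M *\<^sub>R u"
      by simp
    obtain z where "z \<in> S" "cub z > 0" and gt: "(form z z)^3 < form u u * (cub z)\<^sup>2"
      using cub_not_max_at_unit[OF S u w0] by blast
    define N where "N = form z z"
    have "N \<ge> 0" using form_self_nonneg N_def by simp
    have "M\<^sup>2 * form u u = 1"
      using z0(2) by (simp add: z0u form_self_scaleR)
    have "cub z \<le> M * N * sqrt N"
      using max[OF \<open>z \<in> S\<close>] by (simp add: M_def N_def)
    then have "(cub z)\<^sup>2 \<le> (M * N * sqrt N)\<^sup>2"
      using \<open>cub z > 0\<close> by (intro power_mono) auto
    also have "\<dots> = M\<^sup>2 * N^3"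
      using \<open>N \<ge> 0\<close> by (simp add: power_mult_distrib power2_eq_square power3_eq_cube)
    finally have "form u u * (cub z)\<^sup>2 \<le> N^3"
      using \<open>M\<^sup>2 * form u u = 1\<close> form_self_nonneg[of u]
      by (metis mult.assoc mult.commute mult_left_mono mult_1)
    then show False using gt N_def by simp
  qed
  ultimately show ?thesis by blast
qed

section \<open>Associative subalgebras\<close>

lemma assoc_subalgebraD:
  assumes "assoc_subalgebra S"
  shows "subspace S" and "\<And>x y. x \<in> S \<Longrightarrow> y \<in> S \<Longrightarrow> mult x y \<in> S"
    and "\<And>x y z. x \<in> S \<Longrightarrow> y \<in> S \<Longrightarrow> z \<in> S \<Longrightarrow> mult (mult x y) z = mult x (mult y z)"
  using assms unfolding assoc_subalgebra_def subalgebra_def by blast+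

lemma in_span_pair_iff: "x \<in> span {p, q} \<longleftrightarrow> (\<exists>\<alpha> \<beta>. x = \<alpha> *\<^sub>R p + \<beta> *\<^sub>R q)"
proof -
  have "x \<in> span {p, q} \<longleftrightarrow> (\<exists>\<alpha>. x - \<alpha> *\<^sub>R p \<in> span {q})"
    by (rule span_breakdown_eq)
  also have "\<dots> \<longleftrightarrow> (\<exists>\<alpha> \<beta>. x - \<alpha> *\<^sub>R p = \<beta> *\<^sub>R q)"
    by (auto simp: span_singleton)
  finally show ?thesis
    by (metis add_diff_cancel_left' diff_add_cancel add.commute)
qed

text \<open>\<open>alg02\<close> and \<open>alg13\<close> are the spans of \<open>{a\<^sub>0, a\<^sub>2, \<one>}\<close> and of \<open>{a\<^sub>1, a\<^sub>3, \<one>}\<close>.\<close>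

definition alg02 :: "v4a set" where
  "alg02 = {y. y$A1 = 2 * y$Vv \<and> y$A3 = 2 * y$Vv}"

definition alg13 :: "v4a set" where
  "alg13 = {y. y$A0 = 2 * y$Vv \<and> y$A2 = 2 * y$Vv}"

lemma assoc_subalgebra_alg02: "assoc_subalgebra alg02"
  unfolding assoc_subalgebra_def subalgebra_def subspace_def alg02_def
  by (simp add: vec_eq_nsb_iff mult_nth field_simps)

lemma assoc_subalgebra_alg13: "assoc_subalgebra alg13"
  unfolding assoc_subalgebra_def subalgebra_def subspace_def alg13_def
  by (simp add: vec_eq_nsb_iff mult_nth field_simps)

lemma axes_in_alg02: "e A0 \<in> alg02" "e A2 \<in> alg02" "one4A \<in> alg02"
  by (simp_all add: alg02_def)

lemma axes_in_alg13: "e A1 \<in> alg13" "e A3 \<in> alg13" "one4A \<in> alg13"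
  by (simp_all add: alg13_def)

lemma alg02_subset:
  assumes "subspace S" "e A0 \<in> S" "e A2 \<in> S" "one4A \<in> S"
  shows "alg02 \<subseteq> S"
proof
  fix y assume "y \<in> alg02"
  then have "y = (y$A0 - 2 * y$Vv) *\<^sub>R e A0 + (y$A2 - 2 * y$Vv) *\<^sub>R e A2 + (5/2 * y$Vv) *\<^sub>R one4A"
    by (simp add: vec_eq_nsb_iff alg02_def)
  also have "\<dots> \<in> S"
    using assms by (intro subspace_add subspace_scale) simp_all
  finally show "y \<in> S" .
qed

lemma alg13_subset:
  assumes "subspace S" "e A1 \<in> S" "e A3 \<in> S" "one4A \<in> S"
  shows "alg13 \<subseteq> S"
proof
  fix y assume "y \<in> alg13"
  then have "y = (y$A1 - 2 * y$Vv) *\<^sub>R e A1 + (y$A3 - 2 * y$Vv) *\<^sub>R e A3 + (5/2 * y$Vv) *\<^sub>R one4A"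
    by (simp add: vec_eq_nsb_iff alg13_def)
  also have "\<dots> \<in> S"
    using assms by (intro subspace_add subspace_scale) simp_all
  finally show "y \<in> S" .
qed

lemma assoc_subalgebra_subset_alg02:
  assumes "assoc_subalgebra S" and "e A0 \<in> S"
  shows "S \<subseteq> alg02"
proof
  fix y assume "y \<in> S"
  have "mult (e A0) (e A0) = e A0"
    by (simp add: vec_eq_nsb_iff mult_nth)
  then have "mult (e A0) (mult (e A0) y) = mult (e A0) y"
    using assoc_subalgebraD(3)[OF assms(1) assms(2) assms(2) \<open>y \<in> S\<close>] by simp
  then show "y \<in> alg02"
    by (simp add: alg02_def vec_eq_nsb_iff mult_nth field_simps)
qed

lemma assoc_subalgebra_subset_alg13:
  assumes "assoc_subalgebra S" and "e A1 \<in> S"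
  shows "S \<subseteq> alg13"
proof
  fix y assume "y \<in> S"
  have "mult (e A1) (e A1) = e A1"
    by (simp add: vec_eq_nsb_iff mult_nth)
  then have "mult (e A1) (mult (e A1) y) = mult (e A1) y"
    using assoc_subalgebraD(3)[OF assms(1) assms(2) assms(2) \<open>y \<in> S\<close>] by simp
  then show "y \<in> alg13"
    by (simp add: alg13_def vec_eq_nsb_iff mult_nth field_simps)
qed

lemma max_assoc_alg02: "max_assoc_subalgebra alg02"
  unfolding max_assoc_subalgebra_def
  using assoc_subalgebra_alg02 assoc_subalgebra_subset_alg02 axes_in_alg02 by blast

lemma max_assoc_alg13: "max_assoc_subalgebra alg13"
  unfolding max_assoc_subalgebra_def
  using assoc_subalgebra_alg13 assoc_subalgebra_subset_alg13 axes_in_alg13 by blast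

lemma assoc_subalgebra_orthogonal_axes:
  assumes S: "assoc_subalgebra S" "one4A \<in> S"
    and xy: "x \<in> S" "y \<in> S" "x \<in> {e A0, e A1, e A2, e A3}" "y \<in> {e A0, e A1, e A2, e A3}"
    and "mult x y = 0"
  shows "S = alg02 \<or> S = alg13"
proof -
  have "{x, y} = {e A0, e A2} \<or> {x, y} = {e A1, e A3}"
    using xy(3,4) \<open>mult x y = 0\<close> by (auto simp: vec_eq_nsb_iff mult_nth)
  then show ?thesis
    using xy(1,2) assoc_subalgebraD(1)[OF S(1)] S(2)
      assoc_subalgebra_subset_alg02[OF S(1)] alg02_subset
      assoc_subalgebra_subset_alg13[OF S(1)] alg13_subset
    by (metis doubleton_eq_iff insertI1 subset_antisym)
qed

lemma assoc_subalgebra_three_idempotents: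
  assumes S: "assoc_subalgebra S" "one4A \<in> S"
    and in_S: "e1 \<in> S" "e2 \<in> S" "e3 \<in> S"
    and idem: "mult e1 e1 = e1" "mult e2 e2 = e2" "mult e3 e3 = e3"
    and nonzero: "e1 \<noteq> 0" "e2 \<noteq> 0" "e3 \<noteq> 0"
    and orth: "mult e1 e2 = 0" "mult e1 e3 = 0" "mult e2 e3 = 0"
    and sum: "e1 + e2 + e3 = one4A"
  shows "S = alg02 \<or> S = alg13"
proof -
  have tr_cases: "tr x = 1 \<or> tr x \<ge> 12/7" if "mult x x = x" "x \<noteq> 0" for x
    using idempotent_tr_cases[OF that(1)] tr_idempotent_pos[OF that] by auto
  have axis: "x \<in> {e A0, e A1, e A2, e A3}" if "mult x x = x" "tr x = 1" for x
    using idempotent_tr_cases[OF that(1)] that(2) by blast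
  have "tr e1 + tr e2 + tr e3 = 4"
    using sum tr_add[of "e1 + e2" e3] tr_add[of e1 e2] by simp
  then have "(tr e1 = 1 \<and> tr e2 = 1) \<or> (tr e1 = 1 \<and> tr e3 = 1) \<or> (tr e2 = 1 \<and> tr e3 = 1)"
    using tr_cases[OF idem(1) nonzero(1)] tr_cases[OF idem(2) nonzero(2)] tr_cases[OF idem(3) nonzero(3)]
    by auto
  then show ?thesis
  proof (elim disjE conjE)
    assume "tr e1 = 1" "tr e2 = 1"
    then show ?thesis
      using assoc_subalgebra_orthogonal_axes[OF S in_S(1,2) axis axis orth(1)] idem by blast
  next
    assume "tr e1 = 1" "tr e3 = 1"
    then show ?thesis
      using assoc_subalgebra_orthogonal_axes[OF S in_S(1,3) axis axis orth(2)] idem by blast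
  next
    assume "tr e2 = 1" "tr e3 = 1"
    then show ?thesis
      using assoc_subalgebra_orthogonal_axes[OF S in_S(2,3) axis axis orth(3)] idem by blast
  qed
qed

lemma linear_mult: "linear (mult p)"
  by (rule linearI) (simp_all add: mult_add_right mult_scaleR_right)

text \<open>Peirce decomposition: \<open>p S\<close> is a subalgebra with unit \<open>p\<close>.\<close>

lemma exists_idempotent_below:
  assumes S: "assoc_subalgebra S" and p: "p \<in> S" "mult p p = p"
    and w: "w \<in> S" "mult p w \<notin> span {p}"
  obtains g where "g \<in> S" "mult g g = g" "g \<noteq> 0" "g \<noteq> p" "mult p g = g"
proof -
  note sub = assoc_subalgebraD(1)[OF S] and closed = assoc_subalgebraD(2)[OF S]
    and assoc = assoc_subalgebraD(3)[OF S]
  define Sp where "Sp = mult p ` S"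
  have "subspace Sp"
    unfolding Sp_def by (rule linear_subspace_image[OF linear_mult sub])
  moreover have "mult x y \<in> Sp" if xy: "x \<in> Sp" "y \<in> Sp" for x y
  proof -
    obtain s s' where s: "s \<in> S" "s' \<in> S" "x = mult p s" "y = mult p s'"
      using xy unfolding Sp_def by blast
    then have "mult x y = mult p (mult s (mult p s'))"
      using assoc[OF p(1) s(1) closed[OF p(1) s(2)]] by simp
    then show ?thesis
      unfolding Sp_def using closed s(1,2) p(1) by blast
  qed
  moreover have "p \<in> Sp"
    unfolding Sp_def using p by (metis image_eqI)
  moreover have unit: "mult p x = x" if "x \<in> Sp" for x
    using that assoc[OF p(1) p(1)] p(2) unfolding Sp_def by auto
  moreover have "mult p w \<in> Sp"
    unfolding Sp_def using w(1) by blast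
  ultimately obtain g where "g \<in> Sp" "mult g g = g" "g \<noteq> 0" "g \<noteq> p"
    using exists_idempotent w(2) by blast
  moreover have "Sp \<subseteq> S"
    unfolding Sp_def using closed p(1) by blast
  ultimately show ?thesis
    using that unit by blast
qed

lemma assoc_subalgebra_not_in_plane:
  assumes S: "assoc_subalgebra S" "one4A \<in> S" and big: "\<And>y. \<not> S \<subseteq> span {one4A, y}"
  shows "S = alg02 \<or> S = alg13"
proof -
  note sub = assoc_subalgebraD(1)[OF S(1)] and closed = assoc_subalgebraD(2)[OF S(1)]
  have from_idempotent: "S = alg02 \<or> S = alg13"
    if p: "p \<in> S" "mult p p = p" "p \<noteq> one4A" and w: "w \<in> S" "mult p w \<notin> span {p}" for p w
  proof -
    obtain g where g: "g \<in> S" "mult g g = g" "g \<noteq> 0" "g \<noteq> p" "mult p g = g"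
      using exists_idempotent_below[OF S(1) p(1,2) w] .
    have "mult g p = g" using g(5) by (simp add: mult_commute)
    show ?thesis
    proof (rule assoc_subalgebra_three_idempotents[OF S, of g "p - g" "one4A - p"])
      show "p - g \<in> S" "one4A - p \<in> S"
        using sub p(1) g(1) S(2) by (simp_all add: subspace_diff)
    qed (use g p \<open>mult g p = g\<close> in \<open>simp_all add: mult_diff_left mult_diff_right\<close>)
  qed
  obtain w0 where "w0 \<in> S" "w0 \<notin> span {one4A}"
    using big[of one4A] by auto
  then obtain e where e: "e \<in> S" "mult e e = e" "e \<noteq> 0" "e \<noteq> one4A"
    using exists_idempotent[OF sub closed S(2)] by auto
  define f where "f = one4A - e"
  have f: "f \<in> S" "mult f f = f" "f \<noteq> one4A"
    using sub S(2) e by (simp_all add: f_def subspace_diff mult_diff_left mult_diff_right)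
  show ?thesis
  proof (cases "\<exists>w\<in>S. mult e w \<notin> span {e} \<or> mult f w \<notin> span {f}")
    case True
    then show ?thesis
      using from_idempotent e f by blast
  next
    case False
    have "S \<subseteq> span {one4A, e}"
    proof
      fix s assume "s \<in> S"
      have "span {e} \<subseteq> span {one4A, e}" "span {f} \<subseteq> span {one4A, e}"
        by (simp_all add: span_mono span_minimal f_def span_diff span_base)
      moreover have "s = mult e s + mult f s"
        by (simp add: f_def mult_diff_left)
      ultimately show "s \<in> span {one4A, e}"
        using False \<open>s \<in> S\<close> by (metis span_add subsetD)
    qed
    then show ?thesis using big by blast
  qed
qed

lemma Vx_eq_span: "Vx x = span {one4A, x}"
  unfolding Vx_def span_eq
proof
  show "{x, one4A - x} \<subseteq> span {one4A, x}"
    by (simp add: span_base span_diff)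
  have "one4A = x + (one4A - x)" by simp
  then have "one4A \<in> span {x, one4A - x}"
    by (metis span_add span_base insertI1 insertI2 singletonI)
  then show "{one4A, x} \<subseteq> span {x, one4A - x}"
    by (simp add: span_base)
qed

lemma mult_in_plane:
  assumes "mult x x = x"
  shows "mult (a *\<^sub>R one4A + b *\<^sub>R x) (c *\<^sub>R one4A + d *\<^sub>R x)
    = (a * c) *\<^sub>R one4A + (a * d + b * c + b * d) *\<^sub>R x"
  using assms
  by (simp add: mult_add_left mult_add_right mult_scaleR_left mult_scaleR_right algebra_simps)

lemma assoc_subalgebra_Vx:
  assumes "mult x x = x"
  shows "assoc_subalgebra (Vx x)"
proof -
  have mem: "y \<in> Vx x \<longleftrightarrow> (\<exists>a b. y = a *\<^sub>R one4A + b *\<^sub>R x)" for y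
    unfolding Vx_eq_span in_span_pair_iff ..
  have "mult y z \<in> Vx x" if yz: "y \<in> Vx x" "z \<in> Vx x" for y z
  proof -
    obtain a b c d where "y = a *\<^sub>R one4A + b *\<^sub>R x" "z = c *\<^sub>R one4A + d *\<^sub>R x"
      using yz unfolding mem by blast
    then show ?thesis
      unfolding mem using mult_in_plane[OF assms] by blast
  qed
  moreover have "mult (mult y z) w = mult y (mult z w)"
    if yzw: "y \<in> Vx x" "z \<in> Vx x" "w \<in> Vx x" for y z w
  proof -
    obtain a b c d f g where "y = a *\<^sub>R one4A + b *\<^sub>R x" "z = c *\<^sub>R one4A + d *\<^sub>R x"
      "w = f *\<^sub>R one4A + g *\<^sub>R x"
      using yzw unfolding mem by blast
    then show ?thesis
      by (simp only: mult_in_plane[OF assms]) (simp add: algebra_simps)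
  qed
  ultimately show ?thesis
    unfolding assoc_subalgebra_def subalgebra_def by (simp add: Vx_eq_span)
qed

lemma plane_exchange:
  assumes "S \<subseteq> span {one4A, y}" and "x \<in> S" and "x \<notin> span {one4A}"
  shows "S \<subseteq> span {one4A, x}"
proof -
  have "y \<in> span {x, one4A}"
    using in_span_insert[of x y "{one4A}"] assms by (auto simp: insert_commute)
  then have "span {one4A, y} \<subseteq> span {one4A, x}"
    by (intro span_minimal) (auto simp: span_base insert_commute)
  then show ?thesis using assms(1) by blast
qed

lemma one4A_neq_0 [simp]: "one4A \<noteq> 0"
  by (simp add: vec_eq_nsb_iff)

lemma plane_coeffs_eq_0:
  assumes "x \<notin> span {one4A}" and "\<alpha> *\<^sub>R one4A + \<beta> *\<^sub>R x = 0"
  shows "\<alpha> = 0" and "\<beta> = 0"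
proof -
  show "\<beta> = 0"
  proof (rule ccontr)
    assume "\<beta> \<noteq> 0"
    have h: "\<beta> *\<^sub>R x = - (\<alpha> *\<^sub>R one4A)"
      using assms(2) by (simp add: eq_neg_iff_add_eq_0 add.commute)
    have "x = (1 / \<beta>) *\<^sub>R (\<beta> *\<^sub>R x)"
      using \<open>\<beta> \<noteq> 0\<close> by simp
    also have "\<dots> = (- \<alpha> / \<beta>) *\<^sub>R one4A"
      unfolding h by simp
    finally have "x = (- \<alpha> / \<beta>) *\<^sub>R one4A" .
    moreover have "(- \<alpha> / \<beta>) *\<^sub>R one4A \<in> span {one4A}"
      by (intro span_scale span_base) simp
    ultimately show False
      using assms(1) by simp
  qed
  then show "\<alpha> = 0"
    using assms(2) by simp
qed

lemma idempotent_in_span_one: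
  assumes "mult x x = x" and "x \<in> span {one4A}"
  shows "x = 0 \<or> x = one4A"
proof -
  obtain c where x: "x = c *\<^sub>R one4A"
    using assms(2) by (auto simp: span_singleton)
  then have "(c * c) *\<^sub>R one4A = c *\<^sub>R one4A"
    using assms(1) by (simp add: mult_scaleR_left mult_scaleR_right)
  then have "c * c = c"
    by (simp add: scaleR_cancel_right)
  then have "c = 0 \<or> c = 1"
    by (metis mult_cancel_right1 mult_zero_right)
  then show ?thesis
    using x by auto
qed

lemma idempotents_in_plane:
  assumes "mult x x = x" and "x \<notin> span {one4A}"
    and "mult y y = y" and "y \<in> span {one4A, x}"
  shows "y \<in> {0, one4A, x, one4A - x}"
proof -
  obtain a b where y: "y = a *\<^sub>R one4A + b *\<^sub>R x"
    using assms(4) in_span_pair_iff by blast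
  then have "(a * a - a) *\<^sub>R one4A + (2 * a * b + b * b - b) *\<^sub>R x = 0"
    using assms(3) mult_in_plane[OF assms(1), of a b a b] by (simp add: algebra_simps)
  from plane_coeffs_eq_0[OF assms(2) this]
  have "a * (a - 1) = 0" and "b * (2 * a + b - 1) = 0"
    by (simp_all add: algebra_simps)
  then have "(a = 0 \<and> (b = 0 \<or> b = 1)) \<or> (a = 1 \<and> (b = 0 \<or> b = -1))"
    by auto
  then show ?thesis
    using y by auto
qed

lemma assoc_subalgebra_add_one:
  assumes "assoc_subalgebra M"
  shows "assoc_subalgebra {s + c *\<^sub>R one4A | s c. s \<in> M}" (is "assoc_subalgebra ?T")
proof -
  note sub = assoc_subalgebraD(1)[OF assms] and closed = assoc_subalgebraD(2)[OF assms]
    and assoc = assoc_subalgebraD(3)[OF assms]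
  have "?T = {x + y | x y. x \<in> M \<and> y \<in> span {one4A}}"
    by (auto simp: span_singleton)
  then have "subspace ?T"
    using subspace_sums[OF sub subspace_span] by simp
  moreover have "mult x y \<in> ?T" if xy: "x \<in> ?T" "y \<in> ?T" for x y
  proof -
    obtain s c s' c' where "s \<in> M" "s' \<in> M" "x = s + c *\<^sub>R one4A" "y = s' + c' *\<^sub>R one4A"
      using xy by blast
    moreover have "mult (s + c *\<^sub>R one4A) (s' + c' *\<^sub>R one4A)
        = (mult s s' + c' *\<^sub>R s + c *\<^sub>R s') + (c * c') *\<^sub>R one4A"
      by (simp add: mult_add_left mult_add_right mult_scaleR_left mult_scaleR_right algebra_simps)
    moreover have "mult s s' + c' *\<^sub>R s + c *\<^sub>R s' \<in> M" if "s \<in> M" "s' \<in> M"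
      using that closed sub by (intro subspace_add subspace_scale) simp_all
    ultimately show ?thesis by blast
  qed
  moreover have "mult (mult x y) z = mult x (mult y z)" if xyz: "x \<in> ?T" "y \<in> ?T" "z \<in> ?T" for x y z
  proof -
    obtain s1 c1 s2 c2 s3 c3 where "s1 \<in> M" "s2 \<in> M" "s3 \<in> M"
      and "x = s1 + c1 *\<^sub>R one4A" "y = s2 + c2 *\<^sub>R one4A" "z = s3 + c3 *\<^sub>R one4A"
      using xyz by blast
    then show ?thesis
      using assoc[of s1 s2 s3]
      by (simp add: mult_add_left mult_add_right mult_scaleR_left mult_scaleR_right
          scaleR_add_right add_ac)
  qed
  ultimately show ?thesis
    unfolding assoc_subalgebra_def subalgebra_def by blast
qed

lemma one_in_max_assoc:
  assumes "max_assoc_subalgebra M"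
  shows "one4A \<in> M"
proof -
  have M: "assoc_subalgebra M"
    using assms unfolding max_assoc_subalgebra_def by blast
  let ?T = "{s + c *\<^sub>R one4A | s c. s \<in> M}"
  have "M \<subseteq> ?T"
    by (force intro: exI[of _ 0])
  then have "?T = M"
    using assms assoc_subalgebra_add_one[OF M] unfolding max_assoc_subalgebra_def by blast
  moreover have "one4A \<in> ?T"
    using subspace_0[OF assoc_subalgebraD(1)[OF M]] by (force intro: exI[of _ 0] exI[of _ 1])
  ultimately show ?thesis by simp
qed

lemma axis_notin_span_one: "e b \<notin> span {one4A}" if "b \<noteq> Vv"
proof
  assume "e b \<in> span {one4A}"
  then obtain c where "e b = c *\<^sub>R one4A"
    by (auto simp: span_singleton)
  then have "(e b)$A0 = (e b)$A1"
    by simp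
  moreover have "(e b)$A2 = (e b)$A3"
    using \<open>e b = c *\<^sub>R one4A\<close> by simp
  ultimately show False
    using that by (cases b) simp_all
qed

lemma alg02_not_in_plane: "\<not> alg02 \<subseteq> span {one4A, y}"
proof
  assume "alg02 \<subseteq> span {one4A, y}"
  then have "alg02 \<subseteq> span {one4A, e A0}"
    using plane_exchange axes_in_alg02(1) axis_notin_span_one by blast
  then obtain \<alpha> \<beta> where eq: "e A2 = \<alpha> *\<^sub>R one4A + \<beta> *\<^sub>R e A0"
    using axes_in_alg02(2) in_span_pair_iff by blast
  have "(e A2)$A1 = (\<alpha> *\<^sub>R one4A + \<beta> *\<^sub>R e A0)$A1" "(e A2)$A2 = (\<alpha> *\<^sub>R one4A + \<beta> *\<^sub>R e A0)$A2"
    by (simp_all only: eq)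
  then show False by simp
qed

lemma alg13_not_in_plane: "\<not> alg13 \<subseteq> span {one4A, y}"
proof
  assume "alg13 \<subseteq> span {one4A, y}"
  then have "alg13 \<subseteq> span {one4A, e A1}"
    using plane_exchange axes_in_alg13(1) axis_notin_span_one by blast
  then obtain \<alpha> \<beta> where eq: "e A3 = \<alpha> *\<^sub>R one4A + \<beta> *\<^sub>R e A1"
    using axes_in_alg13(2) in_span_pair_iff by blast
  have "(e A3)$A0 = (\<alpha> *\<^sub>R one4A + \<beta> *\<^sub>R e A1)$A0" "(e A3)$A3 = (\<alpha> *\<^sub>R one4A + \<beta> *\<^sub>R e A1)$A3"
    by (simp_all only: eq)
  then show False by simp
qed

lemma not_trivial_if_not_in_plane:
  assumes "\<And>y. \<not> S \<subseteq> span {one4A, y}"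
  shows "\<not> trivial_assoc S"
  unfolding trivial_assoc_def Vx_eq_span
  using assms[of one4A] span_zero span_mono[of "{one4A}" "{one4A, one4A}"] assms
  by auto

lemma max_assoc_nontrivial_cases:
  assumes M: "max_assoc_subalgebra M" and nontriv: "\<not> trivial_assoc M"
  shows "M = alg02 \<or> M = alg13"
proof -
  have A: "assoc_subalgebra M"
    using M unfolding max_assoc_subalgebra_def by blast
  note sub = assoc_subalgebraD(1)[OF A] and closed = assoc_subalgebraD(2)[OF A]
  have one: "one4A \<in> M"
    using one_in_max_assoc[OF M] .
  have False if y: "M \<subseteq> span {one4A, y}" for y
  proof (cases "M \<subseteq> span {one4A}")
    case True
    moreover have "span {one4A} \<subseteq> M"
      using one sub by (intro span_minimal) simp_all
    ultimately show False
      using nontriv unfolding trivial_assoc_def by blast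
  next
    case False
    then obtain w0 where "w0 \<in> M" "w0 \<notin> span {one4A}"
      by blast
    then obtain x where x: "x \<in> M" "mult x x = x" "x \<noteq> 0" "x \<noteq> one4A"
      using exists_idempotent[OF sub closed one] by auto
    have "x \<notin> span {one4A}"
      using idempotent_in_span_one[OF x(2)] x(3,4) by blast
    then have "M \<subseteq> Vx x"
      using plane_exchange[OF y x(1)] by (simp add: Vx_eq_span)
    moreover have "Vx x \<subseteq> M"
      unfolding Vx_eq_span using one x(1) sub by (intro span_minimal) simp_all
    ultimately have "M = Vx x" by blast
    then show False
      using nontriv x unfolding trivial_assoc_def idempotent_def by blast
  qed
  then show ?thesis
    using assoc_subalgebra_not_in_plane[OF A one] by blast
qed

lemma nontrivial_max_assoc_eq: "{S. max_assoc_subalgebra S \<and> \<not> trivial_assoc S} = {alg02, alg13}"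
  using max_assoc_nontrivial_cases max_assoc_alg02 max_assoc_alg13
    not_trivial_if_not_in_plane[OF alg02_not_in_plane] not_trivial_if_not_in_plane[OF alg13_not_in_plane]
  by blast

lemma alg02_neq_alg13: "alg02 \<noteq> alg13"
proof -
  have "e A0 \<notin> alg13"
    by (simp add: alg13_def)
  then show ?thesis
    using axes_in_alg02(1) by blast
qed

section \<open>Infinitely many maximal associative subalgebras \<open>V\<^sub>x\<close>\<close>

text \<open>Solving the idempotent equations under \<open>x\<^sub>0 = x\<^sub>2\<close>, \<open>x\<^sub>1 = x\<^sub>3 = k x\<^sub>0\<close> gives a
  one-parameter family of idempotents of trace \<open>2\<close>.\<close>

definition idem_family :: "real \<Rightarrow> v4a" where
  "idem_family k = (1 / (2 * k\<^sup>2 + k + 2)) *\<^sub>R vec5 (2 * (1 + k)) (2 * k * (1 + k)) (2 * (1 + k)) (2 * k * (1 + k)) (- 3 * k)"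

lemma idem_family_denom_pos: "2 * k\<^sup>2 + k + 2 > (0::real)"
proof -
  have "2 * k\<^sup>2 + k + 2 = 2 * (k + 1/4)\<^sup>2 + 15/8"
    by (simp add: power2_eq_square algebra_simps)
  moreover have "(k + 1/4)\<^sup>2 \<ge> 0"
    by simp
  ultimately show ?thesis
    by linarith
qed

lemma idem_family_idempotent: "mult (idem_family k) (idem_family k) = idem_family k"
proof -
  define D v where "D = 2 * k\<^sup>2 + k + 2"
    and "v = vec5 (2 * (1 + k)) (2 * k * (1 + k)) (2 * (1 + k)) (2 * k * (1 + k)) (- 3 * k)"
  have "D \<noteq> 0"
    using idem_family_denom_pos[of k] unfolding D_def by linarith
  have "mult v v = D *\<^sub>R v"
    by (simp add: vec_eq_nsb_iff mult_nth D_def v_def power2_eq_square field_simps)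
  then show ?thesis
    using \<open>D \<noteq> 0\<close> unfolding idem_family_def D_def[symmetric] v_def[symmetric]
    by (simp add: mult_scaleR_left mult_scaleR_right power2_eq_square)
qed

lemma idem_family_coords:
  assumes "k > 0"
  shows "idem_family k $ A0 > 0" and "idem_family k $ A1 = k * idem_family k $ A0"
    and "idem_family k $ A1 > 0" and "idem_family k $ Vv < 0"
    and "idem_family k $ A2 = idem_family k $ A0"
  using assms idem_family_denom_pos[of k] by (simp_all add: idem_family_def)

lemma idem_family_notin_span_one:
  assumes "k > 0"
  shows "idem_family k \<notin> span {one4A}"
proof
  assume "idem_family k \<in> span {one4A}"
  then obtain c where "idem_family k = c *\<^sub>R one4A"
    by (auto simp: span_singleton)
  then have "idem_family k $ A0 = 2 * idem_family k $ Vv"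
    by simp
  then show False
    using idem_family_coords[OF assms] by simp
qed

lemma max_assoc_Vx_idem_family:
  assumes "k > 0"
  shows "max_assoc_subalgebra (Vx (idem_family k))"
  unfolding max_assoc_subalgebra_def
proof (intro conjI allI impI assoc_subalgebra_Vx idem_family_idempotent)
  let ?x = "idem_family k"
  fix T assume T: "assoc_subalgebra T \<and> Vx ?x \<subseteq> T"
  have "one4A \<in> T" "?x \<in> T"
    using T by (auto simp: Vx_eq_span span_base)
  show "T = Vx ?x"
  proof (cases "\<exists>y. T \<subseteq> span {one4A, y}")
    case True
    then have "T \<subseteq> Vx ?x"
      using plane_exchange \<open>?x \<in> T\<close> idem_family_notin_span_one[OF assms]
      by (auto simp: Vx_eq_span)
    then show ?thesis using T by blast
  next
    case False
    then have "T = alg02 \<or> T = alg13"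
      using assoc_subalgebra_not_in_plane T \<open>one4A \<in> T\<close> by blast
    moreover have "?x \<notin> alg02" "?x \<notin> alg13"
      using idem_family_coords[OF assms] by (auto simp: alg02_def alg13_def)
    ultimately show ?thesis
      using \<open>?x \<in> T\<close> by blast
  qed
qed

lemma Vx_idem_family_inj:
  assumes "k > 0" and "k' > 0" and "Vx (idem_family k') = Vx (idem_family k)"
  shows "k' = k"
proof -
  let ?x = "idem_family k" and ?y = "idem_family k'"
  have "?y \<in> span {one4A, ?x}"
    using assms(3) span_base[of ?y "{one4A, ?y}"] by (simp add: Vx_eq_span)
  then have "?y \<in> {0, one4A, ?x, one4A - ?x}"
    using idempotents_in_plane idem_family_idempotent idem_family_notin_span_one[OF assms(1)] by blast
  moreover have "?y \<noteq> 0" "?y \<noteq> one4A" "?y \<noteq> one4A - ?x"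
    using idem_family_coords[OF assms(1)] idem_family_coords[OF assms(2)]
    by (auto simp: vec_eq_nsb_iff)
  ultimately have "?y = ?x" by blast
  then have "?x $ A1 = k' * ?x $ A0"
    using idem_family_coords(2)[OF assms(2)] by simp
  then have "k' * ?x $ A0 = k * ?x $ A0"
    using idem_family_coords(2)[OF assms(1)] by linarith
  then show ?thesis
    using idem_family_coords(1)[OF assms(1)] by simp
qed

lemma infinite_max_assoc: "infinite {S. max_assoc_subalgebra S}"
proof -
  define F where "F n = Vx (idem_family (real (Suc n)))" for n
  have "inj F"
  proof (rule injI)
    fix m n assume "F m = F n"
    then have "real (Suc m) = real (Suc n)"
      unfolding F_def by (rule Vx_idem_family_inj[rotated 2]) simp_all
    then show "m = n" by simp
  qed
  then have "infinite (range F)"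
    by (rule range_inj_infinite)
  moreover have "range F \<subseteq> {S. max_assoc_subalgebra S}"
    using max_assoc_Vx_idem_family by (auto simp: F_def)
  ultimately show ?thesis
    using infinite_super by blast
qed

theorem mainTheorem10:
  shows "infinite {S. max_assoc_subalgebra S}
         \<and> card {S. max_assoc_subalgebra S \<and> \<not> trivial_assoc S} = 2"
  using infinite_max_assoc alg02_neq_alg13 by (simp add: nontrivial_max_assoc_eq)

end
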